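(* Let $H=(S,A,\delta,\mathcal{O})$ be a POMDP with initial state $\ell_0$, $\mathcal{G}$ the game with probabilistic uncertainty constructed from it, and $\alpha_H$ an observation-based Player-1 strategy in $H$. Define the Player-1 strategy $\alpha_G$ in $\mathcal{G}$ by $\alpha_G(\rho_G)=\alpha_H(h^{-1}(\rho_G))$. Then for all finite prefixes $\rho_H$ of $H$, $\Pr^{\alpha_H}_{\ell_0}(\mathsf{Cone}(\rho_H))=\Pr^{\alpha_G}_{\ell_0}(\mathsf{Cone}(h(\rho_H)))$, where the left side is the measure in $H$ and the right side the measure in $\mathcal{G}$.
   Context: A POMDP is $H=(S,A,\delta,\mathcal{O})$ with $S$ a finite state set, $A$ a finite action set, $\delta:S\times A\to\mathcal{D}(S)$ ($\mathcal{D}$ = probability distributions), and $\mathcal{O}$ a partition of $S$; $\mathsf{obs}(s)$ is the block containing $s$, and $\mathsf{obs}(s_0a_0s_1\ldots s_n)=\mathsf{obs}(s_0)a_0\ldots\mathsf{obs}(s_n)$. An observation-based Player-1 strategy maps prefixes $s_0a_0\ldots s_n$ to $\mathcal{D}(A)$ and agrees on prefixes with equal observation sequences. The measure in $H$ from $\ell_0$: $\Pr(\mathsf{Cone}(\ell_0))=1$ and $\Pr(\mathsf{Cone}(\rho as'))=\Pr(\mathsf{Cone}(\rho))\alpha(\rho)(a)\delta(s,a)(s')$ where $s$ is the last state of $\rho$ ($\mathsf{Cone}(\rho)$ = plays with prefix $\rho$). The game $\mathcal{G}=(L,\Sigma_I,\Sigma_O,\Delta,\mathsf{un})$ constructed from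 $H$ has $L=S$, $\Sigma_I=A$, $\Sigma_O=\{\bot\}$, $\Delta(\ell,a,\bot)=\delta(\ell,a)$, and $\mathsf{un}(\ell)(\ell')=1/|\mathsf{obs}(\ell)|$ if $\mathsf{obs}(\ell')=\mathsf{obs}(\ell)$, else $0$. The map $h$ sends $s_0a_0s_1a_1\ldots s_n$ to $s_0a_0\bot s_1a_1\bot\ldots s_n$ (a bijection). For sequences $\rho=\ell_0\sigma^i_0\sigma^o_0\ldots\ell_n$, $\rho'=\ell'_0\tilde\sigma^i_0\tilde\sigma^o_0\ldots\ell'_m$ of $\mathcal{G}$, $\mathsf{ObsSeq}(\rho)(\rho')=\prod_{j=0}^n\mathsf{un}(\ell_j)(\ell'_j)$ if $m=n$ and all letters coincide, else $0$; $\mathsf{ActMt}(\rho)$ is the set of sequences with the same length and letters as $\rho$. Since Player 2 has only one strategy (always $\bot$), the measure in $\mathcal{G}$ from $\ell_0$ is: $\Pr^{\alpha}_{\ell_0}(\mathsf{Cone}(\ell_0))=1$ and, for $\rho$ with last location $\ell_n$, $\Pr(\mathsf{Cone}(\rho a\bot\ell_{n+1}))=\Pr(\mathsf{Cone}(\rho))\sum_{\rho'\in\mathsf{ActMt}(\rho)}\mathsf{ObsSeq}(\rho)(\rho')\alpha(\rho')(a)\Delta(\ell_n,a,\bot)(\ell_{n+1})$. *)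

theory Defs
  imports "HOL-Probability.Probability" "HOL-Library.Disjoint_Sets"
begin

text \<open>A finite prefix s0 a0 s1 ... sn is represented as (s0, [(a0,s1),...,(a_{n-1},sn)]).\<close>

type_synonym ('s,'a) hpath = "'s \<times> ('a \<times> 's) list"

definition obs :: "'s set set \<Rightarrow> 's \<Rightarrow> 's set" where
  "obs Obs s = (THE B. B \<in> Obs \<and> s \<in> B)"

definition obs_seq :: "'s set set \<Rightarrow> ('s,'a) hpath \<Rightarrow> 's set \<times> ('a \<times> 's set) list" where
  "obs_seq Obs \<rho> = (obs Obs (fst \<rho>), map (\<lambda>(a,s). (a, obs Obs s)) (snd \<rho>))"

definition observation_based :: "'s set set \<Rightarrow> (('s,'a) hpath \<Rightarrow> 'a pmf) \<Rightarrow> bool" where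
  "observation_based Obs \<alpha> \<longleftrightarrow> (\<forall>\<rho> \<rho>'. obs_seq Obs \<rho> = obs_seq Obs \<rho>' \<longrightarrow> \<alpha> \<rho> = \<alpha> \<rho>')"

definition last_state :: "'s \<times> ('b \<times> 's) list \<Rightarrow> 's" where
  "last_state \<rho> = last (fst \<rho> # map snd (snd \<rho>))"

text \<open>Cone probability in H; the argument list is the reversed list of steps.\<close>
primrec pomdp_prob_rev :: "('s \<Rightarrow> 'a \<Rightarrow> 's pmf) \<Rightarrow> (('s,'a) hpath \<Rightarrow> 'a pmf) \<Rightarrow> 's
    \<Rightarrow> 's \<Rightarrow> ('a \<times> 's) list \<Rightarrow> real" where
  "pomdp_prob_rev \<delta> \<alpha> l0 s0 [] = (if s0 = l0 then 1 else 0)"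
| "pomdp_prob_rev \<delta> \<alpha> l0 s0 (x # r) =
     pomdp_prob_rev \<delta> \<alpha> l0 s0 r
     * pmf (\<alpha> (s0, rev r)) (fst x)
     * pmf (\<delta> (last_state (s0, rev r)) (fst x)) (snd x)"

definition pomdp_prob :: "('s \<Rightarrow> 'a \<Rightarrow> 's pmf) \<Rightarrow> (('s,'a) hpath \<Rightarrow> 'a pmf) \<Rightarrow> 's
    \<Rightarrow> ('s,'a) hpath \<Rightarrow> real" where
  "pomdp_prob \<delta> \<alpha> l0 \<rho> = pomdp_prob_rev \<delta> \<alpha> l0 (fst \<rho>) (rev (snd \<rho>))"

section \<open>Games with probabilistic uncertainty, output alphabet {bot} (= unit)\<close>

text \<open>A sequence l0 si0 so0 l1 ... ln is represented as (l0, [(si0,so0,l1),...]).\<close>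
type_synonym ('l,'i) gpath = "'l \<times> ('i \<times> unit \<times> 'l) list"

definition letters :: "('l,'i) gpath \<Rightarrow> ('i \<times> unit) list" where
  "letters \<rho> = map (\<lambda>(a,u,l). (a,u)) (snd \<rho>)"

definition locs :: "('l,'i) gpath \<Rightarrow> 'l list" where
  "locs \<rho> = fst \<rho> # map (\<lambda>(a,u,l). l) (snd \<rho>)"

definition ActMt :: "('l,'i) gpath \<Rightarrow> ('l,'i) gpath set" where
  "ActMt \<rho> = {\<rho>'. length (snd \<rho>') = length (snd \<rho>) \<and> letters \<rho>' = letters \<rho>}"

definition ObsSeq :: "('l \<Rightarrow> 'l \<Rightarrow> real) \<Rightarrow> ('l,'i) gpath \<Rightarrow> ('l,'i) gpath \<Rightarrow> real" where
  "ObsSeq un \<rho> \<rho>' =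
     (if length (snd \<rho>') = length (snd \<rho>) \<and> letters \<rho>' = letters \<rho>
      then (\<Prod>j\<le>length (snd \<rho>). un (locs \<rho> ! j) (locs \<rho>' ! j)) else 0)"

primrec game_prob_rev :: "('l \<Rightarrow> 'i \<Rightarrow> unit \<Rightarrow> 'l pmf) \<Rightarrow> ('l \<Rightarrow> 'l \<Rightarrow> real)
    \<Rightarrow> (('l,'i) gpath \<Rightarrow> 'i pmf) \<Rightarrow> 'l \<Rightarrow> 'l \<Rightarrow> ('i \<times> unit \<times> 'l) list \<Rightarrow> real" where
  "game_prob_rev \<Delta> un \<alpha> l0 m0 [] = (if m0 = l0 then 1 else 0)"
| "game_prob_rev \<Delta> un \<alpha> l0 m0 (x # r) =
     (case x of (a, u, l') \<Rightarrow>
       game_prob_rev \<Delta> un \<alpha> l0 m0 r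
       * (\<Sum>\<rho>'\<in>ActMt (m0, rev r). ObsSeq un (m0, rev r) \<rho>' * pmf (\<alpha> \<rho>') a
            * pmf (\<Delta> (last (locs (m0, rev r))) a u) l'))"

text \<open>Pr^alpha_{l0}(Cone rho) in the game (Player 2 has a unique strategy: always bot).\<close>
definition game_prob :: "('l \<Rightarrow> 'i \<Rightarrow> unit \<Rightarrow> 'l pmf) \<Rightarrow> ('l \<Rightarrow> 'l \<Rightarrow> real)
    \<Rightarrow> (('l,'i) gpath \<Rightarrow> 'i pmf) \<Rightarrow> 'l \<Rightarrow> ('l,'i) gpath \<Rightarrow> real" where
  "game_prob \<Delta> un \<alpha> l0 \<rho> = game_prob_rev \<Delta> un \<alpha> l0 (fst \<rho>) (rev (snd \<rho>))"

definition pomdp_game_Delta :: "('s \<Rightarrow> 'a \<Rightarrow> 's pmf) \<Rightarrow> 's \<Rightarrow> 'a \<Rightarrow> unit \<Rightarrow> 's pmf" where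
  "pomdp_game_Delta \<delta> l a u = \<delta> l a"

definition pomdp_game_un :: "'s set set \<Rightarrow> 's \<Rightarrow> 's \<Rightarrow> real" where
  "pomdp_game_un Obs l l' = (if obs Obs l' = obs Obs l then 1 / real (card (obs Obs l)) else 0)"

definition h :: "('s,'a) hpath \<Rightarrow> ('s,'a) gpath" where
  "h \<rho> = (fst \<rho>, map (\<lambda>(a,s). (a, (), s)) (snd \<rho>))"

end

theory Submission
  imports Defs
begin

text \<open>In the game, Player 1's action at a sequence is drawn from the average of
  \<open>\<alpha>\<^sub>G\<close> over all sequences with the same letters, weighted by \<open>ObsSeq\<close>.  A weight
  is nonzero only if the two sequences have the same observations, and there the
  observation-based \<open>\<alpha>\<^sub>H\<close> is constant; the weights sum to \<open>1\<close> because \<open>un\<close> is a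
  stochastic kernel.  So every factor of the game's cone probability equals the
  corresponding factor in the POMDP, and induction on the prefix length concludes.\<close>

lemma obs_in_partition:
  assumes "partition_on A Obs" and "s \<in> A"
  shows "obs Obs s \<in> Obs" and "s \<in> obs Obs s"
proof -
  obtain B where B: "B \<in> Obs" "s \<in> B" using partition_onD1[OF assms(1)] assms(2) by blast
  have unique: "C = B" if "C \<in> Obs" "s \<in> C" for C
    using disjointD[OF partition_onD2[OF assms(1)]] B that by blast
  have "obs Obs s = B" unfolding obs_def by (rule the_equality) (use B unique in blast)+
  then show "obs Obs s \<in> Obs" and "s \<in> obs Obs s" using B by simp_all
qed

lemma obs_eq_iff_mem:
  assumes "partition_on A Obs" and "l \<in> A" and "s \<in> A"
  shows "obs Obs l = obs Obs s \<longleftrightarrow> l \<in> obs Obs s"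
  using obs_in_partition[OF assms(1,2)] obs_in_partition[OF assms(1,3)]
    disjointD[OF partition_onD2[OF assms(1)]] by blast

lemma sum_pomdp_game_un:
  fixes Obs :: "'s::finite set set"
  assumes "partition_on UNIV Obs"
  shows "(\<Sum>l\<in>UNIV. pomdp_game_un Obs s l) = 1"
proof -
  have "(\<Sum>l\<in>UNIV. pomdp_game_un Obs s l) = (\<Sum>l\<in>obs Obs s. 1 / real (card (obs Obs s)))"
    unfolding pomdp_game_un_def using obs_eq_iff_mem[OF assms]
    by (simp add: sum.If_cases Int_def)
  also have "\<dots> = 1" using obs_in_partition(2)[OF assms] by (auto simp: card_gt_0_iff)
  finally show ?thesis .
qed

lemma sum_lists_prod_stochastic:
  fixes k :: "'l::finite \<Rightarrow> 'l \<Rightarrow> real"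
  assumes "\<And>x. (\<Sum>y\<in>UNIV. k x y) = 1"
  shows "(\<Sum>ys\<in>{ys. length ys = length xs}. \<Prod>j<length xs. k (xs!j) (ys!j)) = 1"
proof (induction xs)
  case Nil then show ?case by simp
next
  case (Cons x xs)
  define S where "S = {ys::'l list. length ys = length xs}"
  have lists_Suc: "{ys. length ys = length (x#xs)} = (\<lambda>(y,ys). y#ys) ` (UNIV \<times> S)"
    unfolding S_def by (auto simp: length_Suc_conv)
  have inj: "inj_on (\<lambda>(y,ys). y#ys) (UNIV \<times> S)" by (auto simp: inj_on_def)
  have prod_Cons: "(\<Prod>j<length (x#xs). k ((x#xs)!j) ((y#ys)!j))
      = k x y * (\<Prod>j<length xs. k (xs!j) (ys!j))" for y ys
    by (simp only: length_Cons prod.lessThan_Suc_shift nth_Cons_0 nth_Cons_Suc)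
  have "(\<Sum>ys\<in>{ys. length ys = length (x#xs)}. \<Prod>j<length (x#xs). k ((x#xs)!j) (ys!j))
      = (\<Sum>(y,ys)\<in>UNIV \<times> S. k x y * (\<Prod>j<length xs. k (xs!j) (ys!j)))"
    unfolding lists_Suc sum.reindex[OF inj] by (simp only: comp_def case_prod_unfold prod_Cons)
  also have "\<dots> = (\<Sum>y\<in>UNIV. k x y * (\<Sum>ys\<in>S. \<Prod>j<length xs. k (xs!j) (ys!j)))"
    by (simp only: sum.cartesian_product[symmetric] sum_distrib_left)
  also have "\<dots> = 1" using Cons assms unfolding S_def by simp
  finally show ?case .
qed

definition gpath_of :: "('i \<times> unit) list \<Rightarrow> 'l list \<Rightarrow> ('l,'i) gpath" where
  "gpath_of w L = (hd L, map (\<lambda>((a,u),l). (a,u,l)) (zip w (tl L)))"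

lemma gpath_of_letters_locs: "gpath_of (letters \<rho>) (locs \<rho>) = \<rho>"
proof -
  have unzip: "map (\<lambda>((a,u),l). (a,u,l)) (zip (map (\<lambda>(a,u,l). (a,u)) ys) (map (\<lambda>(a,u,l). l) ys)) = ys"
    for ys :: "('i \<times> unit \<times> 'l) list"
    by (induction ys) auto
  show ?thesis unfolding gpath_of_def letters_def locs_def list.sel(1,3) unzip by simp
qed

lemma
  assumes "length L = Suc (length w)"
  shows locs_gpath_of: "locs (gpath_of w L) = L"
    and letters_gpath_of: "letters (gpath_of w L) = w"
    and length_gpath_of: "length (snd (gpath_of w L)) = length w"
proof -
  have unit_pair: "(fst p, ()) = p" for p :: "'i \<times> unit" by (cases p) simp
  obtain l L' where "L = l # L'" and "length L' = length w" using assms by (cases L) auto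
  then show "locs (gpath_of w L) = L" and "letters (gpath_of w L) = w"
    and "length (snd (gpath_of w L)) = length w"
    by (simp_all add: gpath_of_def locs_def letters_def comp_def case_prod_beta unit_pair)
qed

lemma ActMt_eq_image_gpath_of:
  fixes \<rho> :: "('l,'i) gpath"
  shows "ActMt \<rho> = gpath_of (letters \<rho>) ` {L. length L = Suc (length (snd \<rho>))}"
proof (intro set_eqI iffI)
  fix \<rho>' assume "\<rho>' \<in> ActMt \<rho>"
  then have len: "length (snd \<rho>') = length (snd \<rho>)" and letters: "letters \<rho>' = letters \<rho>"
    by (simp_all add: ActMt_def)
  have "\<rho>' = gpath_of (letters \<rho>) (locs \<rho>')"
    using gpath_of_letters_locs[of \<rho>'] letters by simp
  moreover have "length (locs \<rho>') = Suc (length (snd \<rho>))" using len by (simp add: locs_def)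
  ultimately show "\<rho>' \<in> gpath_of (letters \<rho>) ` {L. length L = Suc (length (snd \<rho>))}" by blast
next
  fix \<rho>' :: "('l,'i) gpath" assume "\<rho>' \<in> gpath_of (letters \<rho>) ` {L. length L = Suc (length (snd \<rho>))}"
  then obtain L where L: "length L = Suc (length (snd \<rho>))" "\<rho>' = gpath_of (letters \<rho>) L" by blast
  moreover have "length (letters \<rho>) = length (snd \<rho>)" by (simp add: letters_def)
  ultimately show "\<rho>' \<in> ActMt \<rho>" by (simp add: ActMt_def letters_gpath_of length_gpath_of)
qed

lemma sum_ObsSeq_eq_1:
  fixes un :: "'l::finite \<Rightarrow> 'l \<Rightarrow> real" and \<rho> :: "('l,'i) gpath"
  assumes "\<And>x. (\<Sum>y\<in>UNIV. un x y) = 1"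
  shows "(\<Sum>\<rho>'\<in>ActMt \<rho>. ObsSeq un \<rho> \<rho>') = 1"
proof -
  define LS where "LS = {L::'l list. length L = length (locs \<rho>)}"
  have len: "length (locs \<rho>) = Suc (length (letters \<rho>))" "length (letters \<rho>) = length (snd \<rho>)"
    by (simp_all add: locs_def letters_def)
  have ActMt: "ActMt \<rho> = gpath_of (letters \<rho>) ` LS"
    unfolding ActMt_eq_image_gpath_of LS_def len by simp
  have inj: "inj_on (gpath_of (letters \<rho>)) LS"
    by (rule inj_on_inverseI[where g = locs]) (simp add: LS_def locs_gpath_of len)
  have ObsSeq: "ObsSeq un \<rho> (gpath_of (letters \<rho>) L) = (\<Prod>j<length (locs \<rho>). un (locs \<rho> ! j) (L ! j))"
    if "L \<in> LS" for L
    using that len by (simp add: LS_def ObsSeq_def locs_gpath_of letters_gpath_of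
        length_gpath_of lessThan_Suc_atMost)
  have "(\<Sum>\<rho>'\<in>ActMt \<rho>. ObsSeq un \<rho> \<rho>') = (\<Sum>L\<in>LS. \<Prod>j<length (locs \<rho>). un (locs \<rho> ! j) (L ! j))"
    unfolding ActMt sum.reindex[OF inj] by (simp add: ObsSeq)
  also have "\<dots> = 1" unfolding LS_def by (rule sum_lists_prod_stochastic[OF assms])
  finally show ?thesis .
qed

definition h_inv :: "('s,'a) gpath \<Rightarrow> ('s,'a) hpath" where
  "h_inv \<rho> = (fst \<rho>, map (\<lambda>(a,u,l). (a,l)) (snd \<rho>))"

lemma h_inv_h: "h_inv (h \<rho>) = \<rho>"
  by (cases \<rho>) (auto simp: h_inv_def h_def case_prod_beta intro!: map_idI)

lemma h_h_inv: "h (h_inv \<rho>) = \<rho>"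
  by (cases \<rho>) (auto simp: h_inv_def h_def case_prod_beta prod_eq_iff intro!: map_idI)

lemma inv_h_eq_h_inv: "inv h = h_inv"
proof
  fix \<rho>
  have "inj h" by (rule inj_on_inverseI[where g = h_inv]) (simp add: h_inv_h)
  then show "inv h \<rho> = h_inv \<rho>" by (rule inv_f_eq) (simp add: h_h_inv)
qed

lemma obs_seq_h_inv:
  "obs_seq Obs (h_inv \<rho>) = (hd (map (obs Obs) (locs \<rho>)),
     zip (map fst (letters \<rho>)) (tl (map (obs Obs) (locs \<rho>))))"
  by (simp add: obs_seq_def h_inv_def locs_def letters_def zip_map_map zip_same_conv_map
      case_prod_beta comp_def)

lemma obs_seq_h_inv_eq_if_ObsSeq_nonzero:
  assumes "\<rho>' \<in> ActMt \<rho>" and "ObsSeq (pomdp_game_un Obs) \<rho> \<rho>' \<noteq> 0"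
  shows "obs_seq Obs (h_inv \<rho>') = obs_seq Obs (h_inv \<rho>)"
proof -
  have len: "length (snd \<rho>') = length (snd \<rho>)" and letters: "letters \<rho>' = letters \<rho>"
    using assms(1) by (auto simp: ActMt_def)
  have "pomdp_game_un Obs (locs \<rho> ! j) (locs \<rho>' ! j) \<noteq> 0" if "j \<le> length (snd \<rho>)" for j
    using assms(2) that len letters by (simp add: ObsSeq_def)
  then have obs_eq: "obs Obs (locs \<rho>' ! j) = obs Obs (locs \<rho> ! j)" if "j \<le> length (snd \<rho>)" for j
    using that unfolding pomdp_game_un_def by (metis (full_types))
  have "length (locs \<rho>') = length (locs \<rho>)" "length (locs \<rho>) = Suc (length (snd \<rho>))"
    using len by (simp_all add: locs_def)
  then have "map (obs Obs) (locs \<rho>') = map (obs Obs) (locs \<rho>)"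
    by (intro nth_equalityI) (simp_all add: obs_eq less_Suc_eq_le)
  then show ?thesis using letters by (simp only: obs_seq_h_inv)
qed

lemma sum_ObsSeq_observation_based:
  fixes \<alpha> :: "('s::finite,'a) hpath \<Rightarrow> 'a pmf"
  assumes "partition_on UNIV Obs" and "observation_based Obs \<alpha>"
  shows "(\<Sum>\<rho>'\<in>ActMt (h \<rho>). ObsSeq (pomdp_game_un Obs) (h \<rho>) \<rho>' * pmf (\<alpha> (h_inv \<rho>')) a * c)
       = pmf (\<alpha> \<rho>) a * c"
proof -
  have same_action_dist: "ObsSeq (pomdp_game_un Obs) (h \<rho>) \<rho>' * pmf (\<alpha> (h_inv \<rho>')) a
      = ObsSeq (pomdp_game_un Obs) (h \<rho>) \<rho>' * pmf (\<alpha> \<rho>) a" if "\<rho>' \<in> ActMt (h \<rho>)" for \<rho>'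
  proof (cases "ObsSeq (pomdp_game_un Obs) (h \<rho>) \<rho>' = 0")
    case False
    then have "obs_seq Obs (h_inv \<rho>') = obs_seq Obs \<rho>"
      using obs_seq_h_inv_eq_if_ObsSeq_nonzero[OF that] by (simp add: h_inv_h)
    then show ?thesis using assms(2) unfolding observation_based_def by metis
  qed simp
  have "(\<Sum>\<rho>'\<in>ActMt (h \<rho>). ObsSeq (pomdp_game_un Obs) (h \<rho>) \<rho>' * pmf (\<alpha> (h_inv \<rho>')) a * c)
      = (\<Sum>\<rho>'\<in>ActMt (h \<rho>). ObsSeq (pomdp_game_un Obs) (h \<rho>) \<rho>' * pmf (\<alpha> \<rho>) a * c)"
    by (rule sum.cong) (simp_all add: same_action_dist)
  also have "\<dots> = (\<Sum>\<rho>'\<in>ActMt (h \<rho>). ObsSeq (pomdp_game_un Obs) (h \<rho>) \<rho>') * pmf (\<alpha> \<rho>) a * c"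
    by (simp add: sum_distrib_right)
  also have "\<dots> = pmf (\<alpha> \<rho>) a * c"
    by (simp add: sum_ObsSeq_eq_1 sum_pomdp_game_un[OF assms(1)])
  finally show ?thesis .
qed

lemma pomdp_prob_rev_eq_game_prob_rev:
  fixes \<alpha> :: "('s::finite,'a) hpath \<Rightarrow> 'a pmf"
  assumes "partition_on UNIV Obs" and "observation_based Obs \<alpha>"
  shows "pomdp_prob_rev \<delta> \<alpha> l0 s0 r
       = game_prob_rev (pomdp_game_Delta \<delta>) (pomdp_game_un Obs) (\<lambda>\<rho>. \<alpha> (inv h \<rho>)) l0 s0
           (map (\<lambda>(a,s). (a,(),s)) r)"
proof (induction r)
  case Nil then show ?case by simp
next
  case (Cons x r)
  obtain a s where x: "x = (a,s)" by (cases x)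
  have h_prefix: "(s0, rev (map (\<lambda>(a,s). (a,(),s)) r)) = h (s0, rev r)"
    by (simp add: h_def rev_map)
  have last_locs: "last (locs (h (s0, rev r))) = last_state (s0, rev r)"
    by (simp add: locs_def h_def last_state_def case_prod_beta comp_def)
  show ?case
    using sum_ObsSeq_observation_based[OF assms, of "(s0, rev r)" a
        "pmf (\<delta> (last_state (s0, rev r)) a) s"]
    by (simp add: x Cons.IH h_prefix last_locs inv_h_eq_h_inv pomdp_game_Delta_def)
qed

theorem lemma5:
  fixes Obs :: "('s::finite) set set"
    and \<delta> :: "'s \<Rightarrow> ('a::finite) \<Rightarrow> 's pmf"
    and \<alpha>H :: "('s,'a) hpath \<Rightarrow> 'a pmf"
    and l0 :: 's
    and \<rho>H :: "('s,'a) hpath"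
  assumes "partition_on UNIV Obs"
    and "observation_based Obs \<alpha>H"
  shows "pomdp_prob \<delta> \<alpha>H l0 \<rho>H
       = game_prob (pomdp_game_Delta \<delta>) (pomdp_game_un Obs) (\<lambda>\<rho>G. \<alpha>H (inv h \<rho>G)) l0 (h \<rho>H)"
  using pomdp_prob_rev_eq_game_prob_rev[OF assms, of \<delta> l0 "fst \<rho>H" "rev (snd \<rho>H)"]
  by (simp add: pomdp_prob_def game_prob_def h_def rev_map)

end
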